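(* Let $M,N\ge 0$ be integers, $a_0,\dots,a_M\in\mathbb{R}$, $f_M(x)=\sum_{m=0}^M a_mT_m(x)$. For $0\le n\le N$ and $y\in[-1,1]$ let $\tilde R_n(y)=\int_{-1}^{y}f_M(y-1-t)T_n(t)\,\mathrm{d}t=\sum_{k=0}^{M+N+1}R_{k,n}T_k(y)$. Then for all integers $k,n$ with $M+1\le k,n\le N$, $$R_{n,k}=\frac{(-1)^{n+k}\,k}{n}\,R_{k,n}.$$
   Context: $T_m(x)=\cos(m\arccos x)$ is the $m$-th Chebyshev polynomial; $R=(R_{k,n})_{0\le k\le M+N+1,\,0\le n\le N}$ is the matrix of Chebyshev coefficients of the convolutions $\tilde R_n$ (the Chebyshev convolution matrix of $f_M$). *)

theory Defs
  imports "HOL-Analysis.Analysis"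
begin

definition chebT :: "nat \<Rightarrow> real \<Rightarrow> real" where
  "chebT m x = cos (real m * arccos x)"

definition fM :: "(nat \<Rightarrow> real) \<Rightarrow> nat \<Rightarrow> real \<Rightarrow> real" where
  "fM a M x = (\<Sum>m\<le>M. a m * chebT m x)"

definition Rtilde :: "(nat \<Rightarrow> real) \<Rightarrow> nat \<Rightarrow> nat \<Rightarrow> real \<Rightarrow> real" where
  "Rtilde a M n y = integral {-1..y} (\<lambda>t. fM a M (y - 1 - t) * chebT n t)"

end

theory Submission
  imports Defs "HOL-Computational_Algebra.Polynomial"
begin

(* Expanding the kernel as f_M(y - 1 - t) = sum_j d_j (y - t)^j, Cauchy's formula for repeated
   integration turns the j-th term of R~_n into j! times the (j+1)-fold antiderivative of T_n,
   up to a polynomial in y of degree at most j <= M, which does not contribute to the Chebyshev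
   coefficients of index k > M.  On Chebyshev coefficient sequences, antidifferentiation acts
   (apart from the constant term) by the tridiagonal map (A v)_k = (v_(k-1) - v_(k+1)) / (2k).
   With the weights (-1)^k k this map is symmetric on the indices k >= 1, hence so are its
   powers: (-1)^k k (A^r)_(k,n) = (-1)^n n (A^r)_(n,k).  Summing over r = j + 1 gives
   (-1)^n n R_(n,k) = (-1)^k k R_(k,n). *)

section \<open>Polynomials and repeated integration\<close>

lemma smult_sum_right: "smult c (sum f A) = (\<Sum>x\<in>A. smult c (f x))"
  by (induction A rule: infinite_finite_induct) (simp_all add: smult_add_right)

lemma pderiv_sum: "pderiv (sum f A) = (\<Sum>x\<in>A. pderiv (f x))"
  by (induction A rule: infinite_finite_induct) (simp_all add: pderiv_add)

lemma poly_eqI_on_interval: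
  fixes p q :: "real poly"
  assumes "a < b" and "\<And>x. x \<in> {a..b} \<Longrightarrow> poly p x = poly q x"
  shows "p = q"
proof (rule ccontr)
  assume "p \<noteq> q"
  then have "finite {x. poly (p - q) x = 0}" by (intro poly_roots_finite) simp
  moreover have "{a..b} \<subseteq> {x. poly (p - q) x = 0}" using assms(2) by auto
  ultimately have "finite {a..b}" using finite_subset by blast
  then show False using infinite_Icc[OF assms(1)] by simp
qed

lemma has_integral_poly_pderiv:
  fixes a b :: real
  assumes "a \<le> b"
  shows "((\<lambda>t. poly (pderiv p) t) has_integral poly p b - poly p a) {a..b}"
  using assms
  by (intro fundamental_theorem_of_calculus)
     (auto simp flip: has_real_derivative_iff_has_vector_derivative
        intro: DERIV_subset[OF poly_DERIV])

lemma cauchy_repeated_integral_poly: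
  fixes P :: "nat \<Rightarrow> real poly" and a :: real
  assumes antideriv: "\<And>i. pderiv (P (Suc i)) = P i"
  shows "\<exists>q. degree q \<le> j \<and> (\<forall>y\<ge>a.
    ((\<lambda>t. (y - t) ^ j * poly (P 0) t) has_integral fact j * poly (P (Suc j)) y - poly q y)
      {a..y})"
  using antideriv
proof (induction j arbitrary: P)
  case 0
  have "((\<lambda>t. (y - t) ^ 0 * poly (P 0) t) has_integral
      fact 0 * poly (P 1) y - poly [:poly (P 1) a:] y) {a..y}" if "a \<le> y" for y
    using has_integral_poly_pderiv[OF that, of "P 1"] 0 by simp
  then show ?case by (intro exI[of _ "[:poly (P 1) a:]"]) auto
next
  case (Suc j)
  obtain q where "degree q \<le> j" and IH: "\<forall>y\<ge>a. ((\<lambda>t. (y - t) ^ j * poly (P 1) t) has_integral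
      fact j * poly (P (Suc (Suc j))) y - poly q y) {a..y}"
    using Suc.IH[of "\<lambda>i. P (Suc i)"] Suc.prems by auto
  define q' where "q' = smult (of_nat (Suc j)) q + smult (poly (P 1) a) ([:- a, 1:] ^ Suc j)"
  have "degree q' \<le> Suc j"
    unfolding q'_def using \<open>degree q \<le> j\<close> degree_linear_power[of "- a" "Suc j"]
    by (intro degree_add_le order.trans[OF degree_smult_le]) (auto simp del: power_Suc)
  moreover have "((\<lambda>t. (y - t) ^ Suc j * poly (P 0) t) has_integral
      fact (Suc j) * poly (P (Suc (Suc j))) y - poly q' y) {a..y}" if "a \<le> y" for y
  proof -
    \<comment> \<open>integration by parts against \<open>(y - t) ^ Suc j\<close>, whose boundary term at \<open>y\<close> vanishes\<close>
    let ?F = "\<lambda>t. (y - t) ^ Suc j * poly (P 1) t"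
    let ?f = "\<lambda>t. (y - t) ^ Suc j * poly (P 0) t - of_nat (Suc j) * ((y - t) ^ j * poly (P 1) t)"
    have "(?F has_real_derivative ?f t) (at t)" for t
      by (rule DERIV_cong[OF DERIV_mult[OF DERIV_power_Suc[OF DERIV_diff[OF DERIV_const DERIV_ident]]
            poly_DERIV]])
         (simp add: Suc.prems[of 0] algebra_simps)
    then have "(?f has_integral ?F y - ?F a) {a..y}"
      using that by (intro fundamental_theorem_of_calculus)
        (auto simp flip: has_real_derivative_iff_has_vector_derivative intro: DERIV_subset)
    then have "((\<lambda>t. ?f t + of_nat (Suc j) * ((y - t) ^ j * poly (P 1) t)) has_integral
        (?F y - ?F a) + of_nat (Suc j) * (fact j * poly (P (Suc (Suc j))) y - poly q y)) {a..y}"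
      using that IH by (intro has_integral_add has_integral_mult_right) auto
    then show ?thesis
      by (simp add: q'_def algebra_simps)
  qed
  ultimately show ?case by blast
qed

lemma has_integral_poly_convolution:
  fixes P :: "nat \<Rightarrow> real poly" and g :: "real poly" and a :: real
  assumes antideriv: "\<And>i. pderiv (P (Suc i)) = P i" and "degree g \<le> D"
  obtains q where "degree q \<le> D" and "\<And>y. a \<le> y \<Longrightarrow>
    ((\<lambda>t. poly g (y - t) * poly (P 0) t) has_integral
      (\<Sum>j\<le>D. coeff g j * fact j * poly (P (Suc j)) y) - poly q y) {a..y}"
proof -
  have "\<forall>j. \<exists>q. degree q \<le> j \<and> (\<forall>y\<ge>a. ((\<lambda>t. (y - t) ^ j * poly (P 0) t) has_integral
      fact j * poly (P (Suc j)) y - poly q y) {a..y})"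
    using cauchy_repeated_integral_poly[where P = P and a = a, OF antideriv] by blast
  then obtain qs where qs: "\<forall>j. degree (qs j) \<le> j \<and> (\<forall>y\<ge>a.
      ((\<lambda>t. (y - t) ^ j * poly (P 0) t) has_integral
        fact j * poly (P (Suc j)) y - poly (qs j) y) {a..y})"
    by (rule choice[THEN exE])
  define q where "q = (\<Sum>j\<le>D. smult (coeff g j) (qs j))"
  have "degree q \<le> D"
    unfolding q_def using qs
    by (intro degree_sum_le order.trans[OF degree_smult_le])
       (auto intro: order.trans[OF _ atMost_iff[THEN iffD1]])
  moreover have "((\<lambda>t. poly g (y - t) * poly (P 0) t) has_integral
      (\<Sum>j\<le>D. coeff g j * fact j * poly (P (Suc j)) y) - poly q y) {a..y}" if "a \<le> y" for y
  proof -
    have g: "poly g x = (\<Sum>j\<le>D. coeff g j * x ^ j)" for x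
    proof -
      have "poly g x = poly (\<Sum>j\<le>D. monom (coeff g j) j) x"
        by (simp only: poly_as_sum_of_monoms'[OF assms(2)])
      then show ?thesis by (simp add: poly_sum poly_monom)
    qed
    have "((\<lambda>t. \<Sum>j\<le>D. coeff g j * ((y - t) ^ j * poly (P 0) t)) has_integral
        (\<Sum>j\<le>D. coeff g j * (fact j * poly (P (Suc j)) y - poly (qs j) y))) {a..y}"
      using qs that by (intro has_integral_sum has_integral_mult_right) auto
    moreover have "(\<Sum>j\<le>D. coeff g j * (fact j * poly (P (Suc j)) y - poly (qs j) y))
        = (\<Sum>j\<le>D. coeff g j * fact j * poly (P (Suc j)) y) - poly q y"
      by (simp add: q_def poly_sum right_diff_distrib sum_subtractf mult.assoc)
    moreover have "(\<Sum>j\<le>D. coeff g j * ((y - t) ^ j * poly (P 0) t))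
        = poly g (y - t) * poly (P 0) t" for t
      by (simp add: g sum_distrib_right mult.assoc)
    ultimately show ?thesis by simp
  qed
  ultimately show ?thesis using that by blast
qed

section \<open>Chebyshev polynomials\<close>

fun chebT_poly :: "nat \<Rightarrow> real poly" where
  "chebT_poly 0 = 1"
| "chebT_poly (Suc 0) = [:0, 1:]"
| "chebT_poly (Suc (Suc n)) = [:0, 2:] * chebT_poly (Suc n) - chebT_poly n"

fun chebU_poly :: "nat \<Rightarrow> real poly" where
  "chebU_poly 0 = 1"
| "chebU_poly (Suc 0) = [:0, 2:]"
| "chebU_poly (Suc (Suc n)) = [:0, 2:] * chebU_poly (Suc n) - chebU_poly n"

lemma chebT_eq_poly:
  assumes "x \<in> {-1..1}"
  shows "chebT n x = poly (chebT_poly n) x"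
proof (induction n rule: chebT_poly.induct)
  case (3 n)
  let ?t = "arccos x"
  have "cos (real (Suc (Suc n)) * ?t) = 2 * x * cos (real (Suc n) * ?t) - cos (real n * ?t)"
    using cos_add[of "real (Suc n) * ?t" ?t] cos_diff[of "real (Suc n) * ?t" ?t] assms
    by (simp add: algebra_simps)
  with 3 show ?case by (simp add: chebT_def)
qed (use assms in \<open>simp_all add: chebT_def\<close>)

lemma degree_chebT_poly_le: "degree (chebT_poly n) \<le> n"
proof (induction n rule: chebT_poly.induct)
  case (3 n)
  have "degree ([:0, 2:] * chebT_poly (Suc n)) \<le> Suc (Suc n)"
    using 3 degree_mult_le[of "[:0, 2:]" "chebT_poly (Suc n)"] by simp
  with 3 show ?case by (auto intro: order.trans[OF degree_diff_le])
qed simp_all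

lemma coeff_chebT_poly_self: "coeff (chebT_poly n) n = (if n = 0 then 1 else 2 ^ (n - 1))"
proof (induction n rule: chebT_poly.induct)
  case (3 n)
  have "coeff (chebT_poly n) (Suc (Suc n)) = 0"
    using degree_chebT_poly_le[of n] by (simp add: coeff_eq_0)
  with 3 show ?case by simp
qed simp_all

lemma chebU_poly_diff:
  "chebU_poly (Suc (Suc n)) - chebU_poly n = smult 2 (chebT_poly (Suc (Suc n)))"
proof (induction n rule: chebT_poly.induct)
  case (3 n)
  let ?X = "[:0, 2:] :: real poly"
  have "chebU_poly (Suc (Suc (Suc (Suc n)))) - chebU_poly (Suc (Suc n))
      = ?X * (chebU_poly (Suc (Suc (Suc n))) - chebU_poly (Suc n))
        - (chebU_poly (Suc (Suc n)) - chebU_poly n)"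
    by (simp only: chebU_poly.simps right_diff_distrib)
  also have "\<dots> = smult 2 (?X * chebT_poly (Suc (Suc (Suc n))) - chebT_poly (Suc (Suc n)))"
    by (simp only: 3 smult_diff_right mult_smult_right)
  finally show ?case by (simp only: chebT_poly.simps)
qed (simp_all add: one_pCons)

lemma pderiv_chebT_poly: "pderiv (chebT_poly (Suc n)) = smult (of_nat (Suc n)) (chebU_poly n)"
proof (induction n rule: chebT_poly.induct)
  case (3 n)
  let ?X = "[:0, 2:] :: real poly"
  have "pderiv (chebT_poly (Suc (Suc (Suc n))))
      = smult 2 (chebT_poly (Suc (Suc n))) + ?X * pderiv (chebT_poly (Suc (Suc n)))
        - pderiv (chebT_poly (Suc n))"
    by (simp only: chebT_poly.simps pderiv_diff pderiv_mult) (simp add: pderiv_pCons)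
  also have "\<dots> = chebU_poly (Suc (Suc n)) - chebU_poly n
      + smult (of_nat (Suc (Suc n))) (?X * chebU_poly (Suc n))
      - smult (of_nat (Suc n)) (chebU_poly n)"
    by (simp only: 3 chebU_poly_diff mult_smult_right)
  also have "\<dots> = smult (of_nat (Suc (Suc (Suc n)))) (chebU_poly (Suc (Suc n)))"
  proof -
    have "(V - W) - W + smult (of_nat (Suc (Suc n))) V - smult (of_nat (Suc n)) W
        = smult (of_nat (Suc (Suc (Suc n)))) (V - W)" for V W :: "real poly"
      by (simp only: poly_eq_iff coeff_diff coeff_add coeff_smult) (simp add: algebra_simps)
    then show ?thesis by (simp only: chebU_poly.simps(3))
  qed
  finally show ?case .
qed (simp_all add: pderiv_pCons pderiv_mult one_pCons)

(* For m = 1 the second term is smult (1 / 0) _ = 0, so this also covers T_2 / 4. *)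
lemma pderiv_chebT_poly_antideriv:
  assumes "1 \<le> m"
  shows "pderiv (smult (1 / (2 * of_nat (Suc m))) (chebT_poly (Suc m))
      - smult (1 / (2 * of_nat (m - 1))) (chebT_poly (m - 1))) = chebT_poly m"
proof (cases "m = 1")
  case True
  then show ?thesis
    using pderiv_chebT_poly[of 1]
    by (simp add: pderiv_diff pderiv_smult numeral_2_eq_2 del: chebT_poly.simps(3))
next
  case False
  then obtain k where m: "m = Suc (Suc k)" using assms by (cases m; cases "m - 1") auto
  have "pderiv (smult (1 / (2 * of_nat (Suc m))) (chebT_poly (Suc m))
      - smult (1 / (2 * of_nat (m - 1))) (chebT_poly (m - 1)))
      = smult (1 / 2) (chebU_poly (Suc (Suc k)) - chebU_poly k)"
    unfolding m
    by (simp only: pderiv_diff pderiv_smult pderiv_chebT_poly diff_Suc_1 smult_smult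
        smult_diff_right) (simp del: of_nat_Suc)
  also have "\<dots> = chebT_poly m"
    by (simp only: chebU_poly_diff smult_smult m) simp
  finally show ?thesis .
qed

section \<open>Chebyshev coefficient sequences\<close>

definition unit_seq :: "nat \<Rightarrow> nat \<Rightarrow> real" where
  "unit_seq m k = (if k = m then 1 else 0)"

lemma sum_unit_seq:
  assumes "\<forall>k>B. v k = 0"
  shows "(\<Sum>m\<le>B. v m * unit_seq m k) = v k"
proof -
  have "(\<Sum>m\<le>B. v m * unit_seq m k) = (\<Sum>m\<le>B. if m = k then v k else 0)"
    by (rule sum.cong) (auto simp: unit_seq_def)
  also have "\<dots> = v k"
    using assms by (subst sum.delta) (auto simp: not_le)
  finally show ?thesis .
qed

definition cheb_sum :: "nat \<Rightarrow> (nat \<Rightarrow> real) \<Rightarrow> real poly" where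
  "cheb_sum B v = (\<Sum>k\<le>B. smult (v k) (chebT_poly k))"

lemma cheb_sum_unit_seq: "m \<le> B \<Longrightarrow> cheb_sum B (unit_seq m) = chebT_poly m"
  by (simp add: cheb_sum_def unit_seq_def if_distrib[of "\<lambda>c. smult c _"] cong: if_cong)

lemma cheb_sum_eq_cheb_sum:
  assumes "\<forall>k>B. v k = 0" and "B \<le> B'"
  shows "cheb_sum B' v = cheb_sum B v"
  unfolding cheb_sum_def using assms by (intro sum.mono_neutral_right) auto

lemma cheb_sum_sum:
  "cheb_sum B (\<lambda>k. \<Sum>m\<in>S. c m * u m k) = (\<Sum>m\<in>S. smult (c m) (cheb_sum B (u m)))"
  unfolding cheb_sum_def smult_sum smult_sum_right smult_smult by (rule sum.swap)

lemma cheb_sum_diff: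
  "cheb_sum B (\<lambda>k. c * u k - d * w k) = smult c (cheb_sum B u) - smult d (cheb_sum B w)"
  unfolding cheb_sum_def by (simp add: smult_diff_left sum_subtractf smult_sum_right)

lemma degree_cheb_sum: "degree (cheb_sum B v) \<le> B"
  unfolding cheb_sum_def
  by (intro degree_sum_le order.trans[OF degree_smult_le])
     (auto intro: order.trans[OF degree_chebT_poly_le])

lemma cheb_coeff_eq_0_above_degree:
  assumes "degree (\<Sum>k\<le>D. smult (c k) (chebT_poly k)) \<le> M" and "M < k" and "k \<le> D"
  shows "c k = 0"
  using assms
proof (induction D)
  case (Suc D)
  have "coeff (chebT_poly k) (Suc D) = 0" if "k \<le> D" for k
    using degree_chebT_poly_le[of k] that by (intro coeff_eq_0) simp
  then have "coeff (\<Sum>k\<le>Suc D. smult (c k) (chebT_poly k)) (Suc D)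
      = c (Suc D) * coeff (chebT_poly (Suc D)) (Suc D)"
    by (simp add: coeff_sum)
  moreover have "coeff (\<Sum>k\<le>Suc D. smult (c k) (chebT_poly k)) (Suc D) = 0"
    using Suc.prems by (intro coeff_eq_0) simp
  ultimately have "c (Suc D) = 0" by (simp add: coeff_chebT_poly_self)
  with Suc show ?case by (cases "k = Suc D") simp_all
qed simp

lemma cheb_coeff_eq_above_degree:
  assumes "\<forall>y\<in>{-1..1}. (\<Sum>k\<le>D. c k * chebT k y) = (\<Sum>k\<le>D. d k * chebT k y) - poly Q y"
    and "degree Q \<le> M" and "M < k" and "k \<le> D"
  shows "c k = d k"
proof -
  have "(\<Sum>k\<le>D. smult (c k - d k) (chebT_poly k)) = - Q"
    using assms(1)
    by (intro poly_eqI_on_interval[of "-1" 1])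
       (simp_all add: poly_sum chebT_eq_poly left_diff_distrib sum_subtractf)
  then have "c k - d k = 0"
    using cheb_coeff_eq_0_above_degree[of "\<lambda>k. c k - d k" D M k] assms(2-4) by simp
  then show ?thesis by simp
qed

section \<open>Antidifferentiation on Chebyshev coefficients\<close>

(* Read off from the antiderivatives T_1 of T_0, T_2 / 4 of T_1 and
   T_(k+1) / (2(k+1)) - T_(k-1) / (2(k-1)) of T_k for k >= 2; the constant term is set to 0. *)
definition cheb_antideriv :: "(nat \<Rightarrow> real) \<Rightarrow> nat \<Rightarrow> real" where
  "cheb_antideriv v k =
    (if k = 0 then 0 else if k = 1 then v 0 - v 2 / 2 else (v (k - 1) - v (k + 1)) / (2 * real k))"

lemma cheb_antideriv_sum:
  "cheb_antideriv (\<lambda>i. \<Sum>m\<in>S. c m * u m i) k = (\<Sum>m\<in>S. c m * cheb_antideriv (u m) k)"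
  by (simp add: cheb_antideriv_def sum_distrib_left right_diff_distrib sum_subtractf
      flip: sum_divide_distrib)

lemma cheb_antideriv_diff:
  "cheb_antideriv (\<lambda>i. c * u i - d * w i)
    = (\<lambda>k. c * cheb_antideriv u k - d * cheb_antideriv w k)"
  by (simp add: cheb_antideriv_def fun_eq_iff field_simps)

lemma cheb_antideriv_unit_seq_0: "cheb_antideriv (unit_seq 0) = unit_seq 1"
  by (auto simp: cheb_antideriv_def unit_seq_def fun_eq_iff)

lemma cheb_antideriv_unit_seq:
  assumes "1 \<le> m"
  shows "cheb_antideriv (unit_seq m) = (\<lambda>k. 1 / (2 * real (Suc m)) * unit_seq (Suc m) k
    - 1 / (2 * real (m - 1)) * unit_seq (m - 1) k)"
proof -
  obtain j where m: "m = Suc j" using assms by (cases m) auto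
  show ?thesis
    unfolding m fun_eq_iff cheb_antideriv_def unit_seq_def by auto
qed

lemma funpow_cheb_antideriv_vanishes_above:
  "\<forall>k>B. v k = 0 \<Longrightarrow> \<forall>k>B + r. (cheb_antideriv ^^ r) v k = 0"
  by (induction r) (simp_all add: cheb_antideriv_def)

lemma pderiv_cheb_sum_antideriv_unit_seq:
  assumes "m \<le> B"
  shows "pderiv (cheb_sum (Suc B) (cheb_antideriv (unit_seq m))) = chebT_poly m"
proof (cases "m = 0")
  case True
  then show ?thesis by (simp add: cheb_antideriv_unit_seq_0 cheb_sum_unit_seq pderiv_pCons)
next
  case False
  then have m: "1 \<le> m" by simp
  have "cheb_sum (Suc B) (cheb_antideriv (unit_seq m))
      = smult (1 / (2 * of_nat (Suc m))) (chebT_poly (Suc m))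
        - smult (1 / (2 * of_nat (m - 1))) (chebT_poly (m - 1))"
    using assms by (simp only: cheb_antideriv_unit_seq[OF m] cheb_sum_diff cheb_sum_unit_seq)
  then show ?thesis by (simp only: pderiv_chebT_poly_antideriv[OF m])
qed

lemma pderiv_cheb_sum_antideriv:
  assumes "\<forall>k>B. v k = 0"
  shows "pderiv (cheb_sum (Suc B) (cheb_antideriv v)) = cheb_sum B v"
proof -
  have "cheb_antideriv v = (\<lambda>k. \<Sum>m\<le>B. v m * cheb_antideriv (unit_seq m) k)"
    using sum_unit_seq[OF assms] cheb_antideriv_sum[of v unit_seq "{..B}"]
    by (simp add: fun_eq_iff)
  then have "cheb_sum (Suc B) (cheb_antideriv v)
      = (\<Sum>m\<le>B. smult (v m) (cheb_sum (Suc B) (cheb_antideriv (unit_seq m))))"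
    by (simp only: cheb_sum_sum)
  then have "pderiv (cheb_sum (Suc B) (cheb_antideriv v))
      = (\<Sum>m\<le>B. smult (v m) (pderiv (cheb_sum (Suc B) (cheb_antideriv (unit_seq m)))))"
    by (simp add: pderiv_sum pderiv_smult)
  also have "\<dots> = cheb_sum B v"
    unfolding cheb_sum_def[of B v]
    by (intro sum.cong) (simp_all add: pderiv_cheb_sum_antideriv_unit_seq)
  finally show ?thesis .
qed

definition cheb_antideriv_mat :: "nat \<Rightarrow> nat \<Rightarrow> nat \<Rightarrow> real" where
  "cheb_antideriv_mat r k n = (cheb_antideriv ^^ r) (unit_seq n) k"

lemma funpow_cheb_antideriv_diff:
  "(cheb_antideriv ^^ r) (\<lambda>i. c * u i - d * w i)
    = (\<lambda>k. c * (cheb_antideriv ^^ r) u k - d * (cheb_antideriv ^^ r) w k)"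
  by (induction r) (simp_all add: cheb_antideriv_diff)

lemma cheb_antideriv_mat_0_left: "1 \<le> n \<Longrightarrow> cheb_antideriv_mat r 0 n = 0"
  by (cases r) (simp_all add: cheb_antideriv_mat_def cheb_antideriv_def unit_seq_def)

lemma cheb_antideriv_mat_Suc_left:
  assumes "1 \<le> k" and "1 \<le> n"
  shows "cheb_antideriv_mat (Suc r) k n
    = (cheb_antideriv_mat r (k - 1) n - cheb_antideriv_mat r (k + 1) n) / (2 * real k)"
  using assms cheb_antideriv_mat_0_left[OF assms(2), of r]
  by (auto simp: cheb_antideriv_mat_def cheb_antideriv_def numeral_2_eq_2)

lemma cheb_antideriv_mat_Suc_right:
  assumes "1 \<le> n"
  shows "cheb_antideriv_mat (Suc r) k n
    = cheb_antideriv_mat r k (Suc n) / (2 * real (Suc n))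
      - cheb_antideriv_mat r k (n - 1) / (2 * real (n - 1))"
proof -
  have "cheb_antideriv_mat (Suc r) k n = (cheb_antideriv ^^ r) (cheb_antideriv (unit_seq n)) k"
    by (simp only: cheb_antideriv_mat_def funpow_Suc_right o_apply)
  also have "\<dots> = 1 / (2 * real (Suc n)) * cheb_antideriv_mat r k (Suc n)
      - 1 / (2 * real (n - 1)) * cheb_antideriv_mat r k (n - 1)"
    by (simp only: cheb_antideriv_unit_seq[OF assms] funpow_cheb_antideriv_diff
        cheb_antideriv_mat_def)
  finally show ?thesis by simp
qed

lemma cheb_antideriv_mat_symmetric:
  assumes "1 \<le> k" and "1 \<le> n"
  shows "(-1) ^ k * real k * cheb_antideriv_mat r k n
    = (-1) ^ n * real n * cheb_antideriv_mat r n k"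
  using assms
proof (induction r arbitrary: k n)
  case 0
  then show ?case by (simp add: cheb_antideriv_mat_def unit_seq_def)
next
  case (Suc r)
  let ?E = "cheb_antideriv_mat r"
  have up: "(-1) ^ n * real n * ?E n (k + 1) / (2 * real (k + 1))
      = - ((-1) ^ k * ?E (k + 1) n) / 2"
  proof -
    have "(-1) ^ n * real n * ?E n (k + 1) = (-1) ^ (k + 1) * real (k + 1) * ?E (k + 1) n"
      using Suc.IH[of "k + 1" n] Suc.prems by simp
    also have "\<dots> = - ((-1) ^ k * ?E (k + 1) n) * real (k + 1)"
      by simp
    finally show ?thesis by (simp add: field_simps)
  qed
  have down: "(-1) ^ n * real n * ?E n (k - 1) / (2 * real (k - 1))
      = - ((-1) ^ k * ?E (k - 1) n) / 2"
  proof (cases "k = 1")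
    case True
    \<comment> \<open>both sides vanish: \<open>?E 0 n = 0\<close>, and the left side divides by \<open>real 0\<close>\<close>
    then show ?thesis using cheb_antideriv_mat_0_left[of n r] Suc.prems by simp
  next
    case False
    then have "(-1) ^ (k - 1) * real (k - 1) * ?E (k - 1) n = (-1) ^ n * real n * ?E n (k - 1)"
      using Suc.IH[of "k - 1" n] Suc.prems by simp
    moreover have "(-1) ^ k = - ((-1::real) ^ (k - 1))"
      using Suc.prems by (cases k) simp_all
    ultimately show ?thesis using False Suc.prems by (simp add: field_simps)
  qed
  have "(-1) ^ k * real k * cheb_antideriv_mat (Suc r) k n
      = (-1) ^ k * (?E (k - 1) n - ?E (k + 1) n) / 2"
    using Suc.prems by (simp add: cheb_antideriv_mat_Suc_left)
  also have "\<dots> = - ((-1) ^ k * ?E (k + 1) n) / 2 - - ((-1) ^ k * ?E (k - 1) n) / 2"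
    by (simp add: diff_divide_distrib right_diff_distrib)
  also have "\<dots> = (-1) ^ n * real n
      * (?E n (k + 1) / (2 * real (k + 1)) - ?E n (k - 1) / (2 * real (k - 1)))"
    by (simp only: up down right_diff_distrib times_divide_eq_right)
  also have "\<dots> = (-1) ^ n * real n * cheb_antideriv_mat (Suc r) n k"
    using Suc.prems by (simp add: cheb_antideriv_mat_Suc_right)
  finally show ?case .
qed

section \<open>Chebyshev coefficients of the convolutions\<close>

lemma fM_eq_poly: "x \<in> {-1..1} \<Longrightarrow> fM a M x = poly (cheb_sum M a) x"
  by (simp add: fM_def cheb_sum_def poly_sum chebT_eq_poly)

lemma Rtilde_cheb_expansion:
  assumes "n + M + 1 \<le> D"
  obtains Q where "degree Q \<le> M" and "\<And>y. y \<in> {-1..1} \<Longrightarrow> Rtilde a M n y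
    = (\<Sum>k\<le>D. (\<Sum>j\<le>M. coeff (pcompose (cheb_sum M a) [:-1, 1:]) j * fact j
          * cheb_antideriv_mat (Suc j) k n) * chebT k y) - poly Q y"
proof -
  define g where "g = pcompose (cheb_sum M a) [:-1, 1:]"
  define P where "P i = cheb_sum (n + i) ((cheb_antideriv ^^ i) (unit_seq n))" for i
  have vanish: "\<forall>k > n + i. (cheb_antideriv ^^ i) (unit_seq n) k = 0" for i
    using funpow_cheb_antideriv_vanishes_above[of n "unit_seq n"] by (simp add: unit_seq_def)
  have "pderiv (P (Suc i)) = P i" for i
    using pderiv_cheb_sum_antideriv[OF vanish[of i]] by (simp add: P_def)
  moreover have "degree g \<le> M"
    using degree_cheb_sum[of M a] by (simp add: g_def degree_pcompose)
  ultimately obtain Q where "degree Q \<le> M" and conv: "\<And>y. -1 \<le> y \<Longrightarrow>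
      ((\<lambda>t. poly g (y - t) * poly (P 0) t) has_integral
        (\<Sum>j\<le>M. coeff g j * fact j * poly (P (Suc j)) y) - poly Q y) {-1..y}"
    by (rule has_integral_poly_convolution[where a = "-1"]) blast
  have "Rtilde a M n y
      = (\<Sum>k\<le>D. (\<Sum>j\<le>M. coeff g j * fact j * cheb_antideriv_mat (Suc j) k n) * chebT k y)
        - poly Q y"
    if y: "y \<in> {-1..1}" for y
  proof -
    have "Rtilde a M n y = integral {-1..y} (\<lambda>t. poly g (y - t) * poly (P 0) t)"
      unfolding Rtilde_def using y
      by (intro integral_cong)
         (simp add: P_def cheb_sum_unit_seq g_def fM_eq_poly chebT_eq_poly poly_pcompose
            algebra_simps)
    also have "\<dots> = (\<Sum>j\<le>M. coeff g j * fact j * poly (P (Suc j)) y) - poly Q y"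
      using conv y by (intro integral_unique) auto
    also have "(\<Sum>j\<le>M. coeff g j * fact j * poly (P (Suc j)) y)
        = (\<Sum>j\<le>M. coeff g j * fact j * poly (cheb_sum D ((cheb_antideriv ^^ Suc j) (unit_seq n))) y)"
    proof (intro sum.cong refl)
      fix j assume "j \<in> {..M}"
      then show "coeff g j * fact j * poly (P (Suc j)) y
          = coeff g j * fact j * poly (cheb_sum D ((cheb_antideriv ^^ Suc j) (unit_seq n))) y"
        using assms cheb_sum_eq_cheb_sum[OF vanish[of "Suc j"], of D] by (simp add: P_def)
    qed
    also have "\<dots> = (\<Sum>k\<le>D. (\<Sum>j\<le>M. coeff g j * fact j * cheb_antideriv_mat (Suc j) k n) * chebT k y)"
      using y
      by (simp add: cheb_sum_def poly_sum chebT_eq_poly cheb_antideriv_mat_def sum_distrib_left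
          sum_distrib_right mult.assoc sum.swap[of _ "{..M}"])
    finally show ?thesis .
  qed
  with \<open>degree Q \<le> M\<close> show ?thesis
    using that unfolding g_def by blast
qed

lemma Rtilde_cheb_coeff:
  assumes "\<forall>y\<in>{-1..1}. Rtilde a M n y = (\<Sum>k\<le>D. c k * chebT k y)"
    and "n + M + 1 \<le> D" and "M < k" and "k \<le> D"
  shows "c k = (\<Sum>j\<le>M. coeff (pcompose (cheb_sum M a) [:-1, 1:]) j * fact j
    * cheb_antideriv_mat (Suc j) k n)"
proof -
  obtain Q where "degree Q \<le> M" and "\<And>y. y \<in> {-1..1} \<Longrightarrow> Rtilde a M n y
    = (\<Sum>k\<le>D. (\<Sum>j\<le>M. coeff (pcompose (cheb_sum M a) [:-1, 1:]) j * fact j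
          * cheb_antideriv_mat (Suc j) k n) * chebT k y) - poly Q y"
    using Rtilde_cheb_expansion[OF assms(2)] by blast
  with assms(1,3,4) show ?thesis
    by (intro cheb_coeff_eq_above_degree) auto
qed

theorem theorem3p4:
  fixes M N :: nat and a :: "nat \<Rightarrow> real" and R :: "nat \<Rightarrow> nat \<Rightarrow> real"
  assumes R_def: "\<forall>n\<le>N. \<forall>y\<in>{-1..1}.
      Rtilde a M n y = (\<Sum>k\<le>M+N+1. R k n * chebT k y)"
  shows "\<forall>k n. M + 1 \<le> k \<and> k \<le> N \<and> M + 1 \<le> n \<and> n \<le> N \<longrightarrow>
      R n k = (-1) ^ (n + k) * real k / real n * R k n"
proof (intro allI impI)
  fix k n
  assume kn: "M + 1 \<le> k \<and> k \<le> N \<and> M + 1 \<le> n \<and> n \<le> N"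
  let ?c = "\<lambda>j. coeff (pcompose (cheb_sum M a) [:-1, 1:]) j * fact j"
  have R_eq: "R i m = (\<Sum>j\<le>M. ?c j * cheb_antideriv_mat (Suc j) i m)"
    if "M < i" and "i \<le> N" and "m \<le> N" for i m
    using that kn R_def by (intro Rtilde_cheb_coeff[where D = "M + N + 1"]) auto
  have "(-1) ^ n * real n * R n k
      = (\<Sum>j\<le>M. ?c j * ((-1) ^ n * real n * cheb_antideriv_mat (Suc j) n k))"
    using kn by (simp add: R_eq sum_distrib_left mult_ac)
  also have "\<dots> = (\<Sum>j\<le>M. ?c j * ((-1) ^ k * real k * cheb_antideriv_mat (Suc j) k n))"
    using kn by (simp add: cheb_antideriv_mat_symmetric[of n k])
  also have "\<dots> = (-1) ^ k * real k * R k n"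
    using kn by (simp add: R_eq sum_distrib_left mult_ac)
  finally have weighted: "(-1) ^ n * real n * R n k = (-1) ^ k * real k * R k n" .
  have "real n * R n k = (-1) ^ n * ((-1) ^ n * real n * R n k)"
    by (simp flip: mult.assoc power_add)
  also have "\<dots> = (-1) ^ (n + k) * real k * R k n"
    by (simp only: weighted) (simp add: power_add mult.assoc)
  finally show "R n k = (-1) ^ (n + k) * real k / real n * R k n"
    using kn by (simp add: field_simps)
qed

end
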